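(* Consider the resource sharing problem and the Estimation phase of the ENE algorithm described in the context. Then $\mathbb P\left(\exists n:\hat N_n^j\ne N\right)=O\left(\exp(-j^{1.4})\right)$ as $j\to\infty$.
   Context: Model. $N$ agents share $M$ resources, with $N\gg M$. Time is slotted. At each time agent $n$ chooses one resource in $\{1,\dots,M\}$ (or, where specified, no resource). The load of an agent is the number of agents (including itself) accessing the same resource at the same time. Each agent $n$ and resource $m$ has a utility $U_{n,m,1}\in[0,U_{\max}]$, constant in time, drawn once independently from continuous distributions; the utility of agent $n$ on resource $m$ with load $\ell$ is $U_{n,m,\ell}=U_{n,m,1}/\ell$. An agent accessing a resource observes the reward equal to its utility plus noise $\nu$, where $\nu$ is zero-mean sub-Gaussian with variance proxy $b$, i.i.d. over time and agents. Estimation phase of the ENE algorithm. Time is divided into epochs $j=1,2,\dots$; epoch $j$ begins with an Estimation phase of $M+1$ blocks of $j$ time steps. In block $k\le M$ every agent accesses resource $k$ (load $N$), and agent $n$ sets $\hat U^j_{n,k,N}$ to be the average of all its rewards in block $k$ of the Estimation phase over epochs $1,\dots,j$. In block $M+1$, at each time step each agent independently accesses resource 1 with probability $1/2$ and otherwise no resource; $\bar r_n^{j,1,M+1}$ is the average of agent $n$'s rewards over all time steps of block $M+1$ in epochs $1,\dots,j$ in which it accessed resource 1. Agent $n$ estimates the number of agents by $\hat N_n^j=\frac{1}{\ln(1/2)}\ln\left(1-\frac{\bar r_n^{j,1,M+1}}{2\hat U^j_{n,1,N}}\right)$, rounded to the nearest integer (the estimate is counted as correct when this quantity lies strictly within $1/2$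 of $N$). *)

theory Defs
  imports "HOL-Probability.Probability" "HOL-Library.Landau_Symbols"
begin

definition subgaussian :: "'a measure \<Rightarrow> ('a \<Rightarrow> real) \<Rightarrow> real \<Rightarrow> bool" where
  "subgaussian P X b \<longleftrightarrow>
     (\<forall>l::real. integrable P (\<lambda>\<omega>. exp (l * X \<omega>)) \<and>
                (\<integral>\<omega>. exp (l * X \<omega>) \<partial>P) \<le> exp (l^2 * b / 2))"

text \<open>Noise nu n i k s: agent n, epoch i, block k (1..M+1) of the Estimation phase, step s (1..i).
  Access decision acc n i s: in block M+1 of epoch i at step s, agent n accesses resource 1.
  Agents are 1..N, resources 1..M, U n m is the single-load utility U_{n,m,1}.\<close>

text \<open>hat U^j_{n,k,N}: average of rewards of agent n in block k over epochs 1..j (load N).\<close>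
definition U_hat :: "nat \<Rightarrow> (nat \<Rightarrow> nat \<Rightarrow> real) \<Rightarrow> (nat \<Rightarrow> nat \<Rightarrow> nat \<Rightarrow> nat \<Rightarrow> 'a \<Rightarrow> real)
                     \<Rightarrow> nat \<Rightarrow> nat \<Rightarrow> nat \<Rightarrow> 'a \<Rightarrow> real" where
  "U_hat N U nu n k j \<omega> =
     (\<Sum>i\<in>{1..j}. \<Sum>s\<in>{1..i}. U n k / real N + nu n i k s \<omega>) / (\<Sum>i\<in>{1..j}. real i)"

definition load1 :: "nat \<Rightarrow> (nat \<Rightarrow> nat \<Rightarrow> nat \<Rightarrow> 'a \<Rightarrow> bool) \<Rightarrow> nat \<Rightarrow> nat \<Rightarrow> 'a \<Rightarrow> nat" where
  "load1 N acc i s \<omega> = card {n'\<in>{1..N}. acc n' i s \<omega>}"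

definition acc_steps :: "(nat \<Rightarrow> nat \<Rightarrow> nat \<Rightarrow> 'a \<Rightarrow> bool) \<Rightarrow> nat \<Rightarrow> nat \<Rightarrow> 'a \<Rightarrow> (nat \<times> nat) set" where
  "acc_steps acc n j \<omega> = (SIGMA i:{1..j}. {s\<in>{1..i}. acc n i s \<omega>})"

definition r_bar :: "nat \<Rightarrow> nat \<Rightarrow> (nat \<Rightarrow> nat \<Rightarrow> real) \<Rightarrow> (nat \<Rightarrow> nat \<Rightarrow> nat \<Rightarrow> nat \<Rightarrow> 'a \<Rightarrow> real)
                     \<Rightarrow> (nat \<Rightarrow> nat \<Rightarrow> nat \<Rightarrow> 'a \<Rightarrow> bool) \<Rightarrow> nat \<Rightarrow> nat \<Rightarrow> 'a \<Rightarrow> real" where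
  "r_bar N M U nu acc n j \<omega> =
     (\<Sum>(i,s)\<in>acc_steps acc n j \<omega>. U n 1 / real (load1 N acc i s \<omega>) + nu n i (Suc M) s \<omega>)
       / real (card (acc_steps acc n j \<omega>))"

definition N_arg :: "nat \<Rightarrow> nat \<Rightarrow> (nat \<Rightarrow> nat \<Rightarrow> real) \<Rightarrow> (nat \<Rightarrow> nat \<Rightarrow> nat \<Rightarrow> nat \<Rightarrow> 'a \<Rightarrow> real)
                     \<Rightarrow> (nat \<Rightarrow> nat \<Rightarrow> nat \<Rightarrow> 'a \<Rightarrow> bool) \<Rightarrow> nat \<Rightarrow> nat \<Rightarrow> 'a \<Rightarrow> real" where
  "N_arg N M U nu acc n j \<omega> = 1 - r_bar N M U nu acc n j \<omega> / (2 * U_hat N U nu n 1 j \<omega>)"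

definition N_est :: "nat \<Rightarrow> nat \<Rightarrow> (nat \<Rightarrow> nat \<Rightarrow> real) \<Rightarrow> (nat \<Rightarrow> nat \<Rightarrow> nat \<Rightarrow> nat \<Rightarrow> 'a \<Rightarrow> real)
                     \<Rightarrow> (nat \<Rightarrow> nat \<Rightarrow> nat \<Rightarrow> 'a \<Rightarrow> bool) \<Rightarrow> nat \<Rightarrow> nat \<Rightarrow> 'a \<Rightarrow> real" where
  "N_est N M U nu acc n j \<omega> = ln (N_arg N M U nu acc n j \<omega>) / ln (1/2)"

definition est_correct :: "nat \<Rightarrow> nat \<Rightarrow> (nat \<Rightarrow> nat \<Rightarrow> real) \<Rightarrow> (nat \<Rightarrow> nat \<Rightarrow> nat \<Rightarrow> nat \<Rightarrow> 'a \<Rightarrow> real)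
                     \<Rightarrow> (nat \<Rightarrow> nat \<Rightarrow> nat \<Rightarrow> 'a \<Rightarrow> bool) \<Rightarrow> nat \<Rightarrow> nat \<Rightarrow> 'a \<Rightarrow> bool" where
  "est_correct N M U nu acc n j \<omega> \<longleftrightarrow>
     0 < N_arg N M U nu acc n j \<omega> \<and> \<bar>N_est N M U nu acc n j \<omega> - real N\<bar> < 1/2"

end

theory Submission
  imports Defs "HOL-Real_Asymp.Real_Asymp"
begin

text \<open>After j epochs every block of the Estimation phase has been played
  T = j(j+1)/2 times, and the unrounded estimate of N is a continuous function of four empirical
  averages over these steps: the noise in block 1, the noise in block M+1 masked by the agent's
  accesses, the agent's share (access indicator divided by the load of resource 1), and its
  access frequency. At their means (0, 0, (1 - 2^(-N))/N, 1/2) the argument of the logarithm is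
  exactly 2^(-N), so the estimate is N, and it stays within 1/2 of N as long as all four averages
  are within some fixed distance of their means. The steps are independent, and each of the four
  families is either sub-Gaussian (Chernoff bound) or [0,1]-valued (Hoeffding bound), so such a
  deviation has probability exp(-Omega(T)) = exp(-Omega(j^2)). A union bound over the N agents
  gives O(exp(-j^1.4)).\<close>

section \<open>Concentration of averages\<close>

lemma subgaussian_mono:
  assumes "subgaussian M X b" and "b \<le> B"
  shows "subgaussian M X B"
  using assms unfolding subgaussian_def
  by (meson exp_le_cancel_iff divide_right_mono mult_left_mono order_trans zero_le_power2 zero_le_numeral)

lemma subgaussian_uminus:
  assumes "subgaussian M X b"
  shows "subgaussian M (\<lambda>x. - X x) b"
  unfolding subgaussian_def
proof
  fix l :: real
  have "integrable M (\<lambda>x. exp ((- l) * X x)) \<and> (\<integral>x. exp ((- l) * X x) \<partial>M) \<le> exp ((- l)\<^sup>2 * b / 2)"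
    using assms unfolding subgaussian_def by blast
  then show "integrable M (\<lambda>x. exp (l * - X x)) \<and> (\<integral>x. exp (l * - X x) \<partial>M) \<le> exp (l\<^sup>2 * b / 2)"
    by simp
qed

lemma (in prob_space) subgaussian_sum:
  fixes B :: real
  assumes fin: "finite I" and ind: "indep_vars (\<lambda>_. borel) X I"
    and sg: "\<And>i. i \<in> I \<Longrightarrow> subgaussian M (X i) B"
  shows "subgaussian M (\<lambda>x. \<Sum>i\<in>I. X i x) (card I * B)"
  unfolding subgaussian_def
proof
  fix l :: real
  have ind_exp: "indep_vars (\<lambda>_. borel) (\<lambda>i x. exp (l * X i x)) I"
    by (intro indep_vars_compose2[OF ind]) auto
  have int: "integrable M (\<lambda>x. exp (l * X i x))" and mgf: "(\<integral>x. exp (l * X i x) \<partial>M) \<le> exp (l\<^sup>2 * B / 2)"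
    if "i \<in> I" for i
    using sg[OF that] unfolding subgaussian_def by auto
  have prod: "exp (l * (\<Sum>i\<in>I. X i x)) = (\<Prod>i\<in>I. exp (l * X i x))" for x
    by (simp add: sum_distrib_left exp_sum fin)
  show "integrable M (\<lambda>x. exp (l * (\<Sum>i\<in>I. X i x))) \<and>
        (\<integral>x. exp (l * (\<Sum>i\<in>I. X i x)) \<partial>M) \<le> exp (l\<^sup>2 * (card I * B) / 2)"
    unfolding prod
  proof
    show "integrable M (\<lambda>x. \<Prod>i\<in>I. exp (l * X i x))"
      by (rule indep_vars_integrable[OF fin ind_exp int])
    have "(\<integral>x. (\<Prod>i\<in>I. exp (l * X i x)) \<partial>M) = (\<Prod>i\<in>I. \<integral>x. exp (l * X i x) \<partial>M)"
      by (rule indep_vars_lebesgue_integral[OF fin ind_exp int])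
    also have "\<dots> \<le> (\<Prod>i\<in>I. exp (l\<^sup>2 * B / 2))"
      by (intro prod_mono conjI integral_nonneg_AE mgf) auto
    also have "\<dots> = exp (l\<^sup>2 * (card I * B) / 2)"
      by (simp add: exp_of_nat_mult[symmetric] mult_ac)
    finally show "(\<integral>x. (\<Prod>i\<in>I. exp (l * X i x)) \<partial>M) \<le> exp (l\<^sup>2 * (card I * B) / 2)" .
  qed
qed

lemma (in prob_space) subgaussian_tail:
  assumes sg: "subgaussian M Y b" and b: "0 < b" and \<epsilon>: "0 < \<epsilon>"
  shows "prob {x\<in>space M. \<epsilon> \<le> Y x} \<le> exp (- \<epsilon>\<^sup>2 / (2 * b))"
proof -
  define l where "l = \<epsilon> / b"
  have "0 < l" using b \<epsilon> by (simp add: l_def)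
  have int: "integrable M (\<lambda>x. exp (l * Y x))" and mgf: "(\<integral>x. exp (l * Y x) \<partial>M) \<le> exp (l\<^sup>2 * b / 2)"
    using sg unfolding subgaussian_def by auto
  have exponent: "- l * \<epsilon> + l\<^sup>2 * b / 2 = - \<epsilon>\<^sup>2 / (2 * b)"
    using b by (simp add: l_def field_simps power2_eq_square)
  have "prob {x\<in>space M. \<epsilon> \<le> Y x} \<le> exp (- l * \<epsilon>) * (\<integral>x\<in>space M. exp (l * Y x) \<partial>M)"
  proof (rule Chernoff_ineq_ge[OF \<open>0 < l\<close>])
    show "set_integrable M (space M) (\<lambda>x. exp (l * Y x))"
      unfolding set_integrable_def by (rule integrable_mult_indicator[OF _ int]) simp
  qed simp
  also have "\<dots> \<le> exp (- l * \<epsilon>) * exp (l\<^sup>2 * b / 2)"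
    using mgf int by (simp add: set_integral_space)
  also have "\<dots> = exp (- \<epsilon>\<^sup>2 / (2 * b))"
    unfolding mult_exp_exp exponent ..
  finally show ?thesis .
qed

lemma (in prob_space) subgaussian_average_tail:
  fixes \<delta> :: real
  assumes fin: "finite I" and ne: "I \<noteq> {}" and ind: "indep_vars (\<lambda>_. borel) X I"
    and sg: "\<And>i. i \<in> I \<Longrightarrow> subgaussian M (X i) B" and B: "0 < B" and \<delta>: "0 < \<delta>"
  shows "prob {x\<in>space M. \<delta> \<le> \<bar>(\<Sum>i\<in>I. X i x) / card I\<bar>} \<le> 2 * exp (- (\<delta>\<^sup>2 / (2 * B)) * card I)"
proof -
  have cI: "real (card I) > 0" using fin ne by auto
  have [measurable]: "\<And>i. i \<in> I \<Longrightarrow> X i \<in> borel_measurable M"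
    using ind by (auto simp: indep_vars_def)
  define S where "S x = (\<Sum>i\<in>I. X i x)" for x
  have sg_S: "subgaussian M S (card I * B)"
    unfolding S_def by (rule subgaussian_sum[OF fin ind sg])
  have [measurable]: "S \<in> borel_measurable M"
    unfolding S_def[abs_def] by measurable
  have exponent: "- (\<delta> * card I)\<^sup>2 / (2 * (card I * B)) = - (\<delta>\<^sup>2 / (2 * B)) * card I"
    using cI B by (simp add: field_simps power2_eq_square)
  have "{x\<in>space M. \<delta> \<le> \<bar>S x / card I\<bar>}
        = {x\<in>space M. \<delta> * card I \<le> S x} \<union> {x\<in>space M. \<delta> * card I \<le> - S x}"
    using cI by (auto simp: abs_if field_simps)
  also have "prob \<dots> \<le> prob {x\<in>space M. \<delta> * card I \<le> S x} + prob {x\<in>space M. \<delta> * card I \<le> - S x}"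
    by (intro measure_subadditive) auto
  also have "\<dots> \<le> exp (- (\<delta> * card I)\<^sup>2 / (2 * (card I * B)))
                 + exp (- (\<delta> * card I)\<^sup>2 / (2 * (card I * B)))"
    using cI B \<delta> by (intro add_mono subgaussian_tail sg_S subgaussian_uminus) auto
  finally show ?thesis
    unfolding S_def exponent by simp
qed

lemma (in prob_space) Hoeffding_average_tail_unit_interval:
  fixes m \<delta> :: real
  assumes fin: "finite I" and ne: "I \<noteq> {}" and ind: "indep_vars (\<lambda>_. borel) X I"
    and bounded: "\<And>i. i \<in> I \<Longrightarrow> AE x in M. X i x \<in> {0..1}"
    and mean: "\<And>i. i \<in> I \<Longrightarrow> expectation (X i) = m" and \<delta>: "0 < \<delta>"
  shows "prob {x\<in>space M. \<delta> \<le> \<bar>(\<Sum>i\<in>I. X i x) / card I - m\<bar>} \<le> 2 * exp (- (2 * \<delta>\<^sup>2) * card I)"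
proof -
  interpret Hoeffding_ineq M I X "\<lambda>_. 0" "\<lambda>_. 1" "\<Sum>i\<in>I. expectation (X i)"
    by unfold_locales (use fin ind bounded in auto)
  have cI: "real (card I) > 0" using fin ne by auto
  have "{x\<in>space M. \<delta> \<le> \<bar>(\<Sum>i\<in>I. X i x) / card I - m\<bar>}
        = {x\<in>space M. \<delta> * card I \<le> \<bar>(\<Sum>i\<in>I. X i x) - (\<Sum>i\<in>I. expectation (X i))\<bar>}"
    using cI by (auto simp: mean field_simps abs_mult[symmetric] abs_of_pos)
  also have "prob \<dots> \<le> 2 * exp (- 2 * (\<delta> * card I)\<^sup>2 / (\<Sum>i\<in>I. (1 - 0)\<^sup>2))"
    using \<delta> cI by (intro Hoeffding_ineq_abs_ge) auto
  also have "- 2 * (\<delta> * card I)\<^sup>2 / (\<Sum>i\<in>I. (1 - 0 :: real)\<^sup>2) = - (2 * \<delta>\<^sup>2) * card I"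
    using cI by (simp add: power2_eq_square)
  finally show ?thesis .
qed

lemma (in prob_space) subgaussian_indicator_mult:
  assumes ind: "indep_var borel (\<lambda>\<omega>. of_bool (a \<omega>)) borel v"
    and sg: "subgaussian M v B" and B: "0 \<le> B"
  shows "subgaussian M (\<lambda>\<omega>. of_bool (a \<omega>) * v \<omega>) B"
  unfolding subgaussian_def
proof
  fix l :: real
  define p where "p = expectation (\<lambda>\<omega>. of_bool (a \<omega>) :: real)"
  have [measurable]: "(\<lambda>\<omega>. of_bool (a \<omega>) :: real) \<in> borel_measurable M"
    using indep_var_rv1[OF ind] by simp
  have int_a: "integrable M (\<lambda>\<omega>. of_bool (a \<omega>) :: real)"
    by (rule integrable_const_bound[where B=1]) auto
  have p: "0 \<le> p" "p \<le> 1"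
    unfolding p_def using prob_space int_a by (auto intro!: integral_nonneg_AE integral_le_const)
  have int_v: "integrable M (\<lambda>\<omega>. exp (l * v \<omega>))" and mgf_v: "(\<integral>\<omega>. exp (l * v \<omega>) \<partial>M) \<le> exp (l\<^sup>2 * B / 2)"
    using sg unfolding subgaussian_def by auto
  have ind_exp: "indep_var borel (\<lambda>\<omega>. of_bool (a \<omega>) :: real) borel (\<lambda>\<omega>. exp (l * v \<omega>))"
    using indep_var_compose[OF ind, of id borel "\<lambda>x. exp (l * x)" borel] by (simp add: comp_def)
  have split: "exp (l * (of_bool (a \<omega>) * v \<omega>)) = of_bool (a \<omega>) * exp (l * v \<omega>) + (1 - of_bool (a \<omega>))" for \<omega>
    by simp
  have int_prod: "integrable M (\<lambda>\<omega>. of_bool (a \<omega>) * exp (l * v \<omega>))"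
    by (rule indep_var_integrable[OF ind_exp int_a int_v])
  show "integrable M (\<lambda>\<omega>. exp (l * (of_bool (a \<omega>) * v \<omega>))) \<and>
        (\<integral>\<omega>. exp (l * (of_bool (a \<omega>) * v \<omega>)) \<partial>M) \<le> exp (l\<^sup>2 * B / 2)"
  proof
    show "integrable M (\<lambda>\<omega>. exp (l * (of_bool (a \<omega>) * v \<omega>)))"
      unfolding split using int_prod int_a by auto
    have "(\<integral>\<omega>. exp (l * (of_bool (a \<omega>) * v \<omega>)) \<partial>M) = p * (\<integral>\<omega>. exp (l * v \<omega>) \<partial>M) + (1 - p) * 1"
      unfolding split p_def using int_prod int_a prob_space
      by (simp add: indep_var_lebesgue_integral[OF ind_exp int_a int_v])
    also have "\<dots> \<le> p * exp (l\<^sup>2 * B / 2) + (1 - p) * exp (l\<^sup>2 * B / 2)"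
      using p mgf_v B by (intro add_mono mult_left_mono) (auto simp: zero_le_mult_iff)
    finally show "(\<integral>\<omega>. exp (l * (of_bool (a \<omega>) * v \<omega>)) \<partial>M) \<le> exp (l\<^sup>2 * B / 2)"
      by (simp add: algebra_simps)
  qed
qed

lemma (in finite_measure) measure_subadditive4:
  assumes "A \<in> sets M" "B \<in> sets M" "C \<in> sets M" "D \<in> sets M"
  shows "measure M (A \<union> B \<union> C \<union> D) \<le> measure M A + measure M B + measure M C + measure M D"
proof -
  have "measure M (A \<union> B \<union> C \<union> D) \<le> measure M (A \<union> B \<union> C) + measure M D"
    using assms by (intro measure_subadditive) auto
  moreover have "measure M (A \<union> B \<union> C) \<le> measure M (A \<union> B) + measure M C"
    using assms by (intro measure_subadditive) auto
  moreover have "measure M (A \<union> B) \<le> measure M A + measure M B"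
    using assms by (intro measure_subadditive) auto
  ultimately show ?thesis by linarith
qed

section \<open>Independent blocks and fair coins\<close>

lemma (in prob_space) indep_vars_of_disjoint_blocks:
  assumes ind: "indep_vars (\<lambda>_. borel) X UNIV" and disj: "disjoint_family_on K L"
    and g: "\<And>t. t \<in> L \<Longrightarrow> g t \<in> borel_measurable (PiM (K t) (\<lambda>_. borel))"
    and Y: "\<And>t x. t \<in> L \<Longrightarrow> x \<in> space M \<Longrightarrow> Y t x = g t (restrict (\<lambda>i. X i x) (K t))"
  shows "indep_vars (\<lambda>_. borel) Y L"
proof -
  have "indep_vars (\<lambda>_. borel) (\<lambda>t x. g t (restrict (\<lambda>i. X i x) (K t))) L"
    by (intro indep_vars_compose2[OF indep_vars_restrict[OF ind _ disj]] g) auto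
  moreover have "indep_vars (\<lambda>_. borel) (\<lambda>t x. g t (restrict (\<lambda>i. X i x) (K t))) L
                 \<longleftrightarrow> indep_vars (\<lambda>_. borel) Y L"
    unfolding indep_vars_def2
  proof (intro conj_cong indep_sets_cong refl)
    show "(\<forall>t\<in>L. random_variable borel (\<lambda>x. g t (restrict (\<lambda>i. X i x) (K t))))
          \<longleftrightarrow> (\<forall>t\<in>L. random_variable borel (Y t))"
      using Y by (auto cong: measurable_cong)
  next
    fix t assume "t \<in> L"
    then show "{(\<lambda>x. g t (restrict (\<lambda>i. X i x) (K t))) -` A \<inter> space M |A. A \<in> sets borel}
               = {Y t -` A \<inter> space M |A. A \<in> sets borel}"
      using Y by (auto simp: vimage_def)
  qed
  ultimately show ?thesis by blast
qed

lemma sum_Pow_member_div_card_swap: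
  assumes "m \<in> A" and "n \<in> A"
  shows "(\<Sum>S\<in>Pow A. of_bool (m \<in> S) / real (card S)) = (\<Sum>S\<in>Pow A. of_bool (n \<in> S) / real (card S))"
proof -
  define t where "t x = (if x = m then n else if x = n then m else x)" for x
  have tt: "t (t x) = x" for x by (simp add: t_def)
  then have "inj t" by (metis injI)
  have image_Pow: "t ` S \<subseteq> A" if "S \<subseteq> A" for S
    using assms that by (auto simp: t_def)
  have image_invol: "t ` t ` S = S" for S
    by (simp add: image_image tt)
  have summand_swap: "of_bool (n \<in> t ` S) / real (card (t ` S)) = of_bool (m \<in> S) / real (card S)" for S
  proof -
    have "card (t ` S) = card S" using \<open>inj t\<close> by (simp add: card_image inj_on_subset)
    moreover have "n \<in> t ` S \<longleftrightarrow> m \<in> S" by (metis image_iff t_def tt)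
    ultimately show ?thesis by simp
  qed
  show ?thesis
    by (rule sum.reindex_bij_witness[of _ "image t" "image t"]) (simp_all add: image_Pow image_invol summand_swap)
qed

lemma sum_Pow_member_div_card:
  assumes fin: "finite A" and n: "n \<in> A"
  shows "(\<Sum>S\<in>Pow A. of_bool (n \<in> S) / real (card S)) = (2 ^ card A - 1) / card A"
proof -
  (* By symmetry every element of A gives the same sum; summing over all of them gives each
     nonempty S total weight 1. *)
  have "card A * (\<Sum>S\<in>Pow A. of_bool (n \<in> S) / real (card S))
        = (\<Sum>m\<in>A. \<Sum>S\<in>Pow A. of_bool (m \<in> S) / real (card S))"
    using sum_Pow_member_div_card_swap[OF _ n] by simp
  also have "\<dots> = (\<Sum>S\<in>Pow A. (\<Sum>m\<in>A. of_bool (m \<in> S)) / real (card S))"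
    by (subst sum.swap) (simp add: sum_divide_distrib)
  also have "\<dots> = (\<Sum>S\<in>Pow A. of_bool (S \<noteq> {}))"
  proof (intro sum.cong refl)
    fix S assume "S \<in> Pow A"
    then have "(\<Sum>m\<in>A. of_bool (m \<in> S) :: real) = card S" and "finite S"
      using fin by (auto simp: Int_absorb1 Int_def[symmetric] finite_subset)
    then show "(\<Sum>m\<in>A. of_bool (m \<in> S)) / real (card S) = of_bool (S \<noteq> {})" by auto
  qed
  also have "\<dots> = 2 ^ card A - 1"
  proof -
    have "Pow A \<inter> {S. S \<noteq> {}} = Pow A - {{}}" by auto
    then show ?thesis using fin by (simp add: card_Pow card_Diff_singleton)
  qed
  finally have "card A * (\<Sum>S\<in>Pow A. of_bool (n \<in> S) / real (card S)) = 2 ^ card A - 1" .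
  moreover have "real (card A) > 0" using fin n by (auto simp: card_gt_0_iff)
  ultimately show ?thesis by (simp add: eq_divide_eq mult.commute)
qed

lemma (in prob_space) prob_fair_coins_pattern:
  assumes ind: "indep_vars (\<lambda>_. borel) (\<lambda>m \<omega>. of_bool (c m \<omega>) :: real) A"
    and fin: "finite A" and ne: "A \<noteq> {}"
    and fair: "\<And>m. m \<in> A \<Longrightarrow> prob {\<omega>\<in>space M. c m \<omega>} = 1/2"
  shows "prob {\<omega>\<in>space M. \<forall>m\<in>A. c m \<omega> \<longleftrightarrow> m \<in> S} = (1/2) ^ card A"
proof -
  let ?coin = "\<lambda>m \<omega>. of_bool (c m \<omega>) :: real"
  have "{\<omega>\<in>space M. \<forall>m\<in>A. c m \<omega> \<longleftrightarrow> m \<in> S} = (\<Inter>m\<in>A. ?coin m -` {of_bool (m \<in> S)} \<inter> space M)"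
    using ne by auto
  also have "prob \<dots> = (\<Prod>m\<in>A. prob (?coin m -` {of_bool (m \<in> S)} \<inter> space M))"
    by (rule indep_varsD_finite[OF ind ne fin]) simp
  also have "\<dots> = (\<Prod>m\<in>A. 1/2)"
  proof (rule prod.cong[OF refl])
    fix m assume m: "m \<in> A"
    have "?coin m -` {1} \<inter> space M \<in> events"
      using ind m by (auto simp: indep_vars_def intro: measurable_sets)
    moreover have "?coin m -` {1} \<inter> space M = {\<omega>\<in>space M. c m \<omega>}" by auto
    ultimately have ev: "{\<omega>\<in>space M. c m \<omega>} \<in> events" by simp
    show "prob (?coin m -` {of_bool (m \<in> S)} \<inter> space M) = 1/2"
    proof (cases "m \<in> S")
      case True
      then have "?coin m -` {of_bool (m \<in> S)} \<inter> space M = {\<omega>\<in>space M. c m \<omega>}" by auto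
      then show ?thesis using fair[OF m] by simp
    next
      case False
      then have "?coin m -` {of_bool (m \<in> S)} \<inter> space M = space M - {\<omega>\<in>space M. c m \<omega>}" by auto
      then show ?thesis using fair[OF m] prob_compl[OF ev] by simp
    qed
  qed
  finally show ?thesis by simp
qed

lemma (in prob_space) expectation_fair_coins:
  fixes f :: "'b set \<Rightarrow> real"
  assumes ind: "indep_vars (\<lambda>_. borel) (\<lambda>m \<omega>. of_bool (c m \<omega>) :: real) A"
    and fin: "finite A" and ne: "A \<noteq> {}"
    and fair: "\<And>m. m \<in> A \<Longrightarrow> prob {\<omega>\<in>space M. c m \<omega>} = 1/2"
  shows "expectation (\<lambda>\<omega>. f {m\<in>A. c m \<omega>}) = (\<Sum>S\<in>Pow A. f S) / 2 ^ card A"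
proof -
  define E where "E S = {\<omega>\<in>space M. \<forall>m\<in>A. c m \<omega> \<longleftrightarrow> m \<in> S}" for S
  have E_sets: "E S \<in> events" for S
  proof -
    have "{\<omega>\<in>space M. c m \<omega> \<longleftrightarrow> m \<in> S} \<in> events" if "m \<in> A" for m
    proof -
      have "(\<lambda>\<omega>. of_bool (c m \<omega>) :: real) \<in> borel_measurable M"
        using ind that by (auto simp: indep_vars_def)
      then have "(\<lambda>\<omega>. of_bool (c m \<omega>) :: real) -` {of_bool (m \<in> S)} \<inter> space M \<in> events"
        by (rule measurable_sets) simp
      moreover have "(\<lambda>\<omega>. of_bool (c m \<omega>) :: real) -` {of_bool (m \<in> S)} \<inter> space M
                     = {\<omega>\<in>space M. c m \<omega> \<longleftrightarrow> m \<in> S}" by auto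
      ultimately show ?thesis by simp
    qed
    then show ?thesis unfolding E_def using fin by (intro sets.sets_Collect_finite_All) auto
  qed
  have f_eq: "f {m\<in>A. c m \<omega>} = (\<Sum>S\<in>Pow A. f S * indicator (E S) \<omega>)" if "\<omega> \<in> space M" for \<omega>
  proof -
    have "(\<Sum>S\<in>Pow A. f S * indicator (E S) \<omega>) = (\<Sum>S\<in>Pow A. if S = {m\<in>A. c m \<omega>} then f S else 0)"
      using that by (intro sum.cong refl) (auto simp: E_def indicator_def)
    then show ?thesis using fin by simp
  qed
  have "expectation (\<lambda>\<omega>. f {m\<in>A. c m \<omega>}) = expectation (\<lambda>\<omega>. \<Sum>S\<in>Pow A. f S * indicator (E S) \<omega>)"
    by (intro Bochner_Integration.integral_cong refl f_eq)
  also have "\<dots> = (\<Sum>S\<in>Pow A. f S * prob (E S))"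
    using E_sets
    by (subst Bochner_Integration.integral_sum)
       (auto simp: less_top[symmetric])
  also have "\<dots> = (\<Sum>S\<in>Pow A. f S) / 2 ^ card A"
    using prob_fair_coins_pattern[OF ind fin ne fair]
    by (simp add: E_def sum_divide_distrib power_one_over)
  finally show ?thesis .
qed

lemma (in prob_space) expectation_fair_share:
  assumes ind: "indep_vars (\<lambda>_. borel) (\<lambda>m \<omega>. of_bool (c m \<omega>) :: real) A"
    and fin: "finite A" and n: "n \<in> A"
    and fair: "\<And>m. m \<in> A \<Longrightarrow> prob {\<omega>\<in>space M. c m \<omega>} = 1/2"
  shows "expectation (\<lambda>\<omega>. of_bool (c n \<omega>) / real (card {m\<in>A. c m \<omega>})) = (1 - (1/2) ^ card A) / card A"
proof -
  have "expectation (\<lambda>\<omega>. of_bool (c n \<omega>) / real (card {m\<in>A. c m \<omega>}))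
        = expectation (\<lambda>\<omega>. of_bool (n \<in> {m\<in>A. c m \<omega>}) / real (card {m\<in>A. c m \<omega>}))"
    using n by simp
  also have "\<dots> = (\<Sum>S\<in>Pow A. of_bool (n \<in> S) / real (card S)) / 2 ^ card A"
    using n by (intro expectation_fair_coins[OF ind fin _ fair]) auto
  also have "\<dots> = (1 - (1/2) ^ card A) / card A"
    using fin n by (simp add: sum_Pow_member_div_card field_simps)
  finally show ?thesis .
qed

section \<open>Stability of the estimate\<close>

lemma dist_Pair_le_add: "dist (x, y) (x', y') \<le> dist x x' + dist y y'"
  using sqrt_sum_squares_le_sum_abs[of "dist x x'" "dist y y'"] by (simp add: dist_Pair_Pair)

lemma log_estimate_stable:
  fixes u :: real and N :: nat
  assumes u: "0 < u" and N: "1 \<le> N"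
  obtains \<delta> where "0 < \<delta>"
    and "\<And>e1 e2 a d. \<bar>e1\<bar> < \<delta> \<Longrightarrow> \<bar>e2\<bar> < \<delta> \<Longrightarrow> \<bar>a - (1 - (1/2)^N) / N\<bar> < \<delta> \<Longrightarrow> \<bar>d - 1/2\<bar> < \<delta> \<Longrightarrow>
      0 < 1 - ((u * a + e2) / d) / (2 * (u / N + e1)) \<and>
      \<bar>ln (1 - ((u * a + e2) / d) / (2 * (u / N + e1))) / ln (1/2) - N\<bar> < 1/2"
proof -
  define F where "F x = 1 - ((u * fst (snd (snd x)) + fst (snd x)) / snd (snd (snd x))) / (2 * (u / N + fst x))"
    for x :: "real \<times> real \<times> real \<times> real"
  define G where "G x = ln (F x) / ln (1/2)" for x
  define x0 :: "real \<times> real \<times> real \<times> real" where "x0 = (0, 0, (1 - (1/2)^N) / N, 1/2)"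
  have F0: "F x0 = (1/2)^N"
    using N u by (simp add: F_def x0_def field_simps)
  have G0: "G x0 = N"
    by (simp add: G_def F0 ln_realpow)
  have "isCont F x0"
    unfolding F_def x0_def using N u by (intro continuous_intros) (auto simp: add_pos_pos)
  moreover from this have "isCont G x0"
    unfolding G_def using F0 by (intro continuous_intros) auto
  ultimately obtain d1 d2 where d: "0 < d1" "0 < d2"
    and d1: "\<And>x. dist x x0 < d1 \<Longrightarrow> dist (F x) (F x0) < (1/2)^N"
    and d2: "\<And>x. dist x x0 < d2 \<Longrightarrow> dist (G x) (G x0) < 1/2"
    unfolding continuous_at_eps_delta by (metis zero_less_power zero_less_divide_1_iff zero_less_numeral)
  have dist_le: "dist (e1, e2, a, d) x0 \<le> \<bar>e1\<bar> + \<bar>e2\<bar> + \<bar>a - (1 - (1/2)^N) / N\<bar> + \<bar>d - 1/2\<bar>" for e1 e2 a d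
  proof -
    have "dist (e1, e2, a, d) x0 \<le> dist e1 0 + (dist e2 0 + (dist a ((1 - (1/2)^N) / N) + dist d (1/2)))"
      unfolding x0_def by (meson add_left_mono dist_Pair_le_add order_trans)
    then show ?thesis by (simp add: dist_real_def)
  qed
  show ?thesis
  proof (rule that[of "min d1 d2 / 4"])
    fix e1 e2 a d :: real
    assume "\<bar>e1\<bar> < min d1 d2 / 4" "\<bar>e2\<bar> < min d1 d2 / 4"
      "\<bar>a - (1 - (1/2)^N) / N\<bar> < min d1 d2 / 4" "\<bar>d - 1/2\<bar> < min d1 d2 / 4"
    then have "dist (e1, e2, a, d) x0 < min d1 d2"
      using dist_le[of e1 e2 a d] by linarith
    then have "dist (F (e1, e2, a, d)) (F x0) < (1/2)^N" "dist (G (e1, e2, a, d)) (G x0) < 1/2"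
      using d1 d2 by auto
    then show "0 < 1 - ((u * a + e2) / d) / (2 * (u / N + e1)) \<and>
        \<bar>ln (1 - ((u * a + e2) / d) / (2 * (u / N + e1))) / ln (1/2) - N\<bar> < 1/2"
      using F0 G0 by (auto simp: F_def G_def dist_real_def abs_less_iff)
  qed (use d in simp)
qed

section \<open>Empirical averages of the Estimation phase\<close>

definition estimation_steps :: "nat \<Rightarrow> (nat \<times> nat) set" where
  "estimation_steps j = (SIGMA i:{1..j}. {1..i})"

definition step_average :: "(nat \<times> nat \<Rightarrow> 'a \<Rightarrow> real) \<Rightarrow> nat \<Rightarrow> 'a \<Rightarrow> real" where
  "step_average X j \<omega> = (\<Sum>p\<in>estimation_steps j. X p \<omega>) / card (estimation_steps j)"

definition block_noise :: "(nat \<Rightarrow> nat \<Rightarrow> nat \<Rightarrow> nat \<Rightarrow> 'a \<Rightarrow> real) \<Rightarrow> nat \<Rightarrow> nat \<Rightarrow> nat \<times> nat \<Rightarrow> 'a \<Rightarrow> real" where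
  "block_noise nu n k p \<omega> = nu n (fst p) k (snd p) \<omega>"

definition accessed :: "(nat \<Rightarrow> nat \<Rightarrow> nat \<Rightarrow> 'a \<Rightarrow> bool) \<Rightarrow> nat \<Rightarrow> nat \<times> nat \<Rightarrow> 'a \<Rightarrow> real" where
  "accessed acc n p \<omega> = of_bool (acc n (fst p) (snd p) \<omega>)"

definition load_share :: "nat \<Rightarrow> (nat \<Rightarrow> nat \<Rightarrow> nat \<Rightarrow> 'a \<Rightarrow> bool) \<Rightarrow> nat \<Rightarrow> nat \<times> nat \<Rightarrow> 'a \<Rightarrow> real" where
  "load_share N acc n p \<omega> = accessed acc n p \<omega> / real (load1 N acc (fst p) (snd p) \<omega>)"

definition masked_noise :: "nat \<Rightarrow> (nat \<Rightarrow> nat \<Rightarrow> nat \<Rightarrow> nat \<Rightarrow> 'a \<Rightarrow> real) \<Rightarrow> (nat \<Rightarrow> nat \<Rightarrow> nat \<Rightarrow> 'a \<Rightarrow> bool)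
    \<Rightarrow> nat \<Rightarrow> nat \<times> nat \<Rightarrow> 'a \<Rightarrow> real" where
  "masked_noise M nu acc n p \<omega> = accessed acc n p \<omega> * nu n (fst p) (Suc M) (snd p) \<omega>"

lemma finite_estimation_steps [simp]: "finite (estimation_steps j)"
  by (simp add: estimation_steps_def)

lemma estimation_steps_nonempty:
  assumes "1 \<le> j"
  shows "estimation_steps j \<noteq> {}"
proof -
  have "(1, 1) \<in> estimation_steps j" using assms by (simp add: estimation_steps_def)
  then show ?thesis by blast
qed

lemma card_estimation_steps: "real (card (estimation_steps j)) = (\<Sum>i\<in>{1..j}. real i)"
  by (simp add: estimation_steps_def)

lemma card_estimation_steps_ge: "real j ^ 2 / 2 \<le> real (card (estimation_steps j))"
proof -
  have "2 * (\<Sum>i\<in>{1..j}. real i) = real j * (real j + 1)"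
    by (induction j) (simp_all add: algebra_simps atLeastAtMostSuc_conv)
  then show ?thesis by (simp add: card_estimation_steps power2_eq_square algebra_simps)
qed

lemma exp_card_estimation_steps_le:
  fixes a c :: real
  assumes "0 \<le> c" and "2 * c \<le> a"
  shows "exp (- a * card (estimation_steps j)) \<le> exp (- c * real j ^ 2)"
proof -
  have "2 * c * (real j ^ 2 / 2) \<le> a * card (estimation_steps j)"
    using assms card_estimation_steps_ge[of j] by (intro mult_mono) auto
  then show ?thesis by simp
qed

lemma borel_measurable_step_average [measurable]:
  assumes [measurable]: "\<And>p. X p \<in> borel_measurable M"
  shows "step_average X j \<in> borel_measurable M"
  unfolding step_average_def[abs_def] by measurable

lemma U_hat_eq_step_average:
  assumes "1 \<le> j"
  shows "U_hat N U nu n k j \<omega> = U n k / N + step_average (block_noise nu n k) j \<omega>"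
proof -
  define T where "T = real (card (estimation_steps j))"
  define s where "s = (\<Sum>p\<in>estimation_steps j. block_noise nu n k p \<omega>)"
  have "T > 0" using estimation_steps_nonempty[OF assms] by (simp add: T_def card_gt_0_iff)
  have "(\<Sum>i\<in>{1..j}. \<Sum>s\<in>{1..i}. U n k / real N + nu n i k s \<omega>)
        = (\<Sum>p\<in>estimation_steps j. U n k / real N + block_noise nu n k p \<omega>)"
    by (simp add: estimation_steps_def block_noise_def sum.Sigma case_prod_beta)
  also have "\<dots> = T * (U n k / N) + s"
    by (simp add: sum.distrib T_def s_def)
  finally show ?thesis
    using \<open>T > 0\<close> unfolding U_hat_def step_average_def card_estimation_steps[symmetric]
    by (simp add: T_def[symmetric] s_def[symmetric] field_simps)
qed

lemma r_bar_eq_step_averages: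
  assumes "1 \<le> j"
  shows "r_bar N M U nu acc n j \<omega> =
    (U n 1 * step_average (load_share N acc n) j \<omega> + step_average (masked_noise M nu acc n) j \<omega>)
      / step_average (accessed acc n) j \<omega>"
proof -
  let ?S = "estimation_steps j"
  define T where "T = real (card ?S)"
  have "T > 0" using estimation_steps_nonempty[OF assms] by (simp add: T_def card_gt_0_iff)
  have steps: "acc_steps acc n j \<omega> = {p\<in>?S. acc n (fst p) (snd p) \<omega>}"
    by (auto simp: acc_steps_def estimation_steps_def)
  have num: "(\<Sum>(i, s)\<in>acc_steps acc n j \<omega>. U n 1 / real (load1 N acc i s \<omega>) + nu n i (Suc M) s \<omega>)
        = U n 1 * (\<Sum>p\<in>?S. load_share N acc n p \<omega>) + (\<Sum>p\<in>?S. masked_noise M nu acc n p \<omega>)"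
    unfolding steps sum.inter_filter[OF finite_estimation_steps] sum_distrib_left sum.distrib[symmetric]
    by (intro sum.cong refl) (simp add: load_share_def masked_noise_def accessed_def split_beta)
  have den: "real (card (acc_steps acc n j \<omega>)) = (\<Sum>p\<in>?S. accessed acc n p \<omega>)"
    unfolding steps by (simp add: accessed_def Int_def)
  have rescale: "(u * (a / T) + b / T) / (d / T) = (u * a + b) / d" for u a b d
    using \<open>T > 0\<close> by (cases "d = 0") (simp_all add: field_simps)
  show ?thesis
    unfolding r_bar_def step_average_def num den T_def[symmetric] rescale ..
qed

lemma est_correct_if_step_averages_near_means:
  assumes u: "0 < U n 1" and N: "1 \<le> N"
  obtains \<delta> where "0 < \<delta>"
    and "\<And>j \<omega>. 1 \<le> j \<Longrightarrow>
      \<bar>step_average (block_noise nu n 1) j \<omega>\<bar> < \<delta> \<Longrightarrow>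
      \<bar>step_average (masked_noise M nu acc n) j \<omega>\<bar> < \<delta> \<Longrightarrow>
      \<bar>step_average (load_share N acc n) j \<omega> - (1 - (1/2)^N) / N\<bar> < \<delta> \<Longrightarrow>
      \<bar>step_average (accessed acc n) j \<omega> - 1/2\<bar> < \<delta> \<Longrightarrow> est_correct N M U nu acc n j \<omega>"
proof -
  obtain \<delta> where "0 < \<delta>" and stable: "\<And>e1 e2 a d. \<bar>e1\<bar> < \<delta> \<Longrightarrow> \<bar>e2\<bar> < \<delta> \<Longrightarrow>
      \<bar>a - (1 - (1/2)^N) / N\<bar> < \<delta> \<Longrightarrow> \<bar>d - 1/2\<bar> < \<delta> \<Longrightarrow>
      0 < 1 - ((U n 1 * a + e2) / d) / (2 * (U n 1 / N + e1)) \<and>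
      \<bar>ln (1 - ((U n 1 * a + e2) / d) / (2 * (U n 1 / N + e1))) / ln (1/2) - N\<bar> < 1/2"
    by (rule log_estimate_stable[OF u N]) (rule that)
  show ?thesis
  proof (rule that[OF \<open>0 < \<delta>\<close>])
    fix j \<omega>
    assume "1 \<le> j" and close:
      "\<bar>step_average (block_noise nu n 1) j \<omega>\<bar> < \<delta>"
      "\<bar>step_average (masked_noise M nu acc n) j \<omega>\<bar> < \<delta>"
      "\<bar>step_average (load_share N acc n) j \<omega> - (1 - (1/2)^N) / N\<bar> < \<delta>"
      "\<bar>step_average (accessed acc n) j \<omega> - 1/2\<bar> < \<delta>"
    show "est_correct N M U nu acc n j \<omega>"
      using stable[OF close]
      unfolding est_correct_def N_est_def N_arg_def U_hat_eq_step_average[OF \<open>1 \<le> j\<close>]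
        r_bar_eq_step_averages[OF \<open>1 \<le> j\<close>]
      by simp
  qed
qed

section \<open>The probabilistic model\<close>

locale ene_estimation = prob_space P
  for P :: "'a measure" and N M :: nat
    and nu :: "nat \<Rightarrow> nat \<Rightarrow> nat \<Rightarrow> nat \<Rightarrow> 'a \<Rightarrow> real"
    and acc :: "nat \<Rightarrow> nat \<Rightarrow> nat \<Rightarrow> 'a \<Rightarrow> bool" and b :: real +
  assumes agents_pos: "1 \<le> N"
    and noise_subgaussian: "\<And>n i k s. subgaussian P (nu n i k s) b"
    and access_event: "\<And>n i s. {\<omega>\<in>space P. acc n i s \<omega>} \<in> events"
    and access_fair: "\<And>n i s. prob {\<omega>\<in>space P. acc n i s \<omega>} = 1/2"
    and observations_indep: "indep_vars (\<lambda>_. borel)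
           (\<lambda>x \<omega>. case x of Inl (n, i, k, s) \<Rightarrow> nu n i k s \<omega>
                          | Inr (n, i, s) \<Rightarrow> of_bool (acc n i s \<omega>)) UNIV"
begin

lemma indep_block_noise: "indep_vars (\<lambda>_. borel) (block_noise nu n k) UNIV"
  by (rule indep_vars_of_disjoint_blocks[OF observations_indep,
        where K="\<lambda>p. {Inl (n, fst p, k, snd p)}" and g="\<lambda>p f. f (Inl (n, fst p, k, snd p))"])
     (auto simp: disjoint_family_on_def block_noise_def intro!: measurable_component_singleton)

lemma indep_accessed: "indep_vars (\<lambda>_. borel) (accessed acc n) UNIV"
  by (rule indep_vars_of_disjoint_blocks[OF observations_indep,
        where K="\<lambda>p. {Inr (n, fst p, snd p)}" and g="\<lambda>p f. f (Inr (n, fst p, snd p))"])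
     (auto simp: disjoint_family_on_def accessed_def intro!: measurable_component_singleton)

lemma indep_masked_noise: "indep_vars (\<lambda>_. borel) (masked_noise M nu acc n) UNIV"
  by (rule indep_vars_of_disjoint_blocks[OF observations_indep,
        where K="\<lambda>p. {Inr (n, fst p, snd p), Inl (n, fst p, Suc M, snd p)}"
          and g="\<lambda>p f. f (Inr (n, fst p, snd p)) * f (Inl (n, fst p, Suc M, snd p))"])
     (auto simp: disjoint_family_on_def masked_noise_def accessed_def
           intro!: borel_measurable_times measurable_component_singleton)

lemma indep_load_share:
  assumes n: "n \<in> {1..N}"
  shows "indep_vars (\<lambda>_. borel) (load_share N acc n) UNIV"
proof (rule indep_vars_of_disjoint_blocks[OF observations_indep,
      where K="\<lambda>p. (\<lambda>m. Inr (m, fst p, snd p)) ` {1..N}"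
        and g="\<lambda>p f. f (Inr (n, fst p, snd p)) / (\<Sum>m\<in>{1..N}. f (Inr (m, fst p, snd p)))"])
  show "disjoint_family_on (\<lambda>p. (\<lambda>m. Inr (m, fst p, snd p)) ` {1..N}) UNIV"
    by (auto simp: disjoint_family_on_def prod_eq_iff)
  fix p :: "nat \<times> nat"
  have component: "(\<lambda>f :: _ \<Rightarrow> real. f (Inr (m, fst p, snd p)))
      \<in> borel_measurable (Pi\<^sub>M ((\<lambda>m. Inr (m, fst p, snd p)) ` {1..N}) (\<lambda>_. borel))" if "m \<in> {1..N}" for m
    using that by (intro measurable_component_singleton[where M="\<lambda>_. borel"]) auto
  show "(\<lambda>f :: _ \<Rightarrow> real. f (Inr (n, fst p, snd p)) / (\<Sum>m\<in>{1..N}. f (Inr (m, fst p, snd p))))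
        \<in> borel_measurable (Pi\<^sub>M ((\<lambda>m. Inr (m, fst p, snd p)) ` {1..N}) (\<lambda>_. borel))"
    by (rule borel_measurable_divide[OF component[OF n] borel_measurable_sum[OF component]])
  fix \<omega>
  have "(\<Sum>m\<in>{1..N}. of_bool (acc m (fst p) (snd p) \<omega>)) = real (load1 N acc (fst p) (snd p) \<omega>)"
    by (simp add: load1_def Int_def)
  then show "load_share N acc n p \<omega> = (\<lambda>f. f (Inr (n, fst p, snd p)) / (\<Sum>m\<in>{1..N}. f (Inr (m, fst p, snd p))))
        (\<lambda>i\<in>(\<lambda>m. Inr (m, fst p, snd p)) ` {1..N}. case i of Inl (n, i, k, s) \<Rightarrow> nu n i k s \<omega>
                          | Inr (n, i, s) \<Rightarrow> of_bool (acc n i s \<omega>))"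
    using n by (simp add: load_share_def accessed_def split_beta)
qed

lemma subgaussian_block_noise:
  assumes "b \<le> B" shows "subgaussian P (block_noise nu n k p) B"
  using subgaussian_mono[OF noise_subgaussian assms] by (simp add: block_noise_def[abs_def])

lemma subgaussian_masked_noise:
  assumes "b \<le> B" and "0 \<le> B"
  shows "subgaussian P (masked_noise M nu acc n p) B"
proof -
  have borel: "case_bool borel borel = (\<lambda>_::bool. borel :: real measure)"
    by (simp add: fun_eq_iff split: bool.split)
  have "indep_var borel (\<lambda>\<omega>. of_bool (acc n (fst p) (snd p) \<omega>)) borel (nu n (fst p) (Suc M) (snd p))"
    unfolding indep_var_def borel
    by (intro indep_vars_of_disjoint_blocks[OF observations_indep,
          where K="\<lambda>t. {if t then Inr (n, fst p, snd p) else Inl (n, fst p, Suc M, snd p)}"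
            and g="\<lambda>t f. f (if t then Inr (n, fst p, snd p) else Inl (n, fst p, Suc M, snd p))"])
       (auto simp: disjoint_family_on_def split_beta intro!: measurable_component_singleton split: bool.split)
  from subgaussian_indicator_mult[OF this subgaussian_mono[OF noise_subgaussian assms(1)] assms(2)]
  show ?thesis by (simp add: masked_noise_def[abs_def] accessed_def)
qed

lemma expectation_accessed: "expectation (accessed acc n p) = 1/2"
proof -
  have "expectation (accessed acc n p) = expectation (indicator {\<omega>\<in>space P. acc n (fst p) (snd p) \<omega>})"
    by (intro Bochner_Integration.integral_cong) (auto simp: accessed_def indicator_def)
  also have "\<dots> = 1/2"
    using access_event access_fair by (simp add: Int_absorb2)
  finally show ?thesis .
qed

lemma expectation_load_share:
  assumes n: "n \<in> {1..N}"
  shows "expectation (load_share N acc n p) = (1 - (1/2)^N) / N"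
proof -
  have "indep_vars (\<lambda>_. borel) (\<lambda>m \<omega>. of_bool (acc m (fst p) (snd p) \<omega>) :: real) {1..N}"
    by (rule indep_vars_of_disjoint_blocks[OF observations_indep,
          where K="\<lambda>m. {Inr (m, fst p, snd p)}" and g="\<lambda>m f. f (Inr (m, fst p, snd p))"])
       (auto simp: disjoint_family_on_def split_beta intro!: measurable_component_singleton)
  from expectation_fair_share[OF this _ n access_fair]
  show ?thesis by (simp add: load_share_def[abs_def] accessed_def load1_def)
qed

lemma load_share_unit_interval:
  assumes n: "n \<in> {1..N}"
  shows "load_share N acc n p \<omega> \<in> {0..1}"
proof (cases "acc n (fst p) (snd p) \<omega>")
  case True
  then have "n \<in> {m\<in>{1..N}. acc m (fst p) (snd p) \<omega>}" using n by simp
  then have "0 < load1 N acc (fst p) (snd p) \<omega>"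
    unfolding load1_def by (auto simp: card_gt_0_iff)
  then show ?thesis using True by (simp add: load_share_def accessed_def)
qed (simp add: load_share_def accessed_def)

lemma borel_measurable_block_noise [measurable]: "block_noise nu n k p \<in> borel_measurable P"
  using indep_block_noise[of n k] unfolding indep_vars_def by blast

lemma borel_measurable_accessed [measurable]: "accessed acc n p \<in> borel_measurable P"
  using indep_accessed[of n] unfolding indep_vars_def by blast

lemma borel_measurable_masked_noise [measurable]: "masked_noise M nu acc n p \<in> borel_measurable P"
  using indep_masked_noise[of n] unfolding indep_vars_def by blast

lemma borel_measurable_load_share [measurable]: "load_share N acc n p \<in> borel_measurable P"
proof -
  have "load_share N acc n p = (\<lambda>\<omega>. accessed acc n p \<omega> / (\<Sum>m\<in>{1..N}. accessed acc m p \<omega>))"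
    by (simp add: fun_eq_iff load_share_def load1_def accessed_def Int_def)
  then show ?thesis by simp
qed

lemma est_incorrect_event:
  assumes "1 \<le> j"
  shows "{\<omega>\<in>space P. \<not> est_correct N M U nu acc n j \<omega>} \<in> events"
  unfolding est_correct_def N_est_def N_arg_def U_hat_eq_step_average[OF assms]
    r_bar_eq_step_averages[OF assms]
  by measurable

(* The Chernoff bound needs a positive variance proxy, and b itself may be 0; max b 1 is a
   convenient positive proxy dominating it. *)
lemma prob_block_noise_average_far:
  fixes \<delta> :: real
  assumes "0 < \<delta>" and "1 \<le> j"
  shows "prob {\<omega>\<in>space P. \<delta> \<le> \<bar>step_average (block_noise nu n k) j \<omega>\<bar>}
    \<le> 2 * exp (- (\<delta>\<^sup>2 / (2 * max b 1)) * card (estimation_steps j))"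
  unfolding step_average_def
  by (intro subgaussian_average_tail estimation_steps_nonempty indep_vars_subset[OF indep_block_noise]
        subgaussian_block_noise assms) auto

lemma prob_masked_noise_average_far:
  fixes \<delta> :: real
  assumes "0 < \<delta>" and "1 \<le> j"
  shows "prob {\<omega>\<in>space P. \<delta> \<le> \<bar>step_average (masked_noise M nu acc n) j \<omega>\<bar>}
    \<le> 2 * exp (- (\<delta>\<^sup>2 / (2 * max b 1)) * card (estimation_steps j))"
  unfolding step_average_def
  by (intro subgaussian_average_tail estimation_steps_nonempty indep_vars_subset[OF indep_masked_noise]
        subgaussian_masked_noise assms) auto

lemma prob_load_share_average_far:
  fixes \<delta> :: real
  assumes "n \<in> {1..N}" and "0 < \<delta>" and "1 \<le> j"
  shows "prob {\<omega>\<in>space P. \<delta> \<le> \<bar>step_average (load_share N acc n) j \<omega> - (1 - (1/2)^N) / N\<bar>}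
    \<le> 2 * exp (- (2 * \<delta>\<^sup>2) * card (estimation_steps j))"
  unfolding step_average_def
  by (intro Hoeffding_average_tail_unit_interval estimation_steps_nonempty
        indep_vars_subset[OF indep_load_share] expectation_load_share AE_I2 load_share_unit_interval assms) auto

lemma prob_accessed_average_far:
  fixes \<delta> :: real
  assumes "0 < \<delta>" and "1 \<le> j"
  shows "prob {\<omega>\<in>space P. \<delta> \<le> \<bar>step_average (accessed acc n) j \<omega> - 1/2\<bar>}
    \<le> 2 * exp (- (2 * \<delta>\<^sup>2) * card (estimation_steps j))"
  unfolding step_average_def
  by (intro Hoeffding_average_tail_unit_interval estimation_steps_nonempty
        indep_vars_subset[OF indep_accessed] expectation_accessed AE_I2 assms) (auto simp: accessed_def)

definition average_deviation_event :: "nat \<Rightarrow> real \<Rightarrow> nat \<Rightarrow> 'a set" where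
  "average_deviation_event n \<delta> j = {\<omega>\<in>space P.
     \<delta> \<le> \<bar>step_average (block_noise nu n 1) j \<omega>\<bar> \<or> \<delta> \<le> \<bar>step_average (masked_noise M nu acc n) j \<omega>\<bar> \<or>
     \<delta> \<le> \<bar>step_average (load_share N acc n) j \<omega> - (1 - (1/2)^N) / N\<bar> \<or>
     \<delta> \<le> \<bar>step_average (accessed acc n) j \<omega> - 1/2\<bar>}"

lemma prob_average_deviation_event:
  assumes n: "n \<in> {1..N}" and \<delta>: "0 < \<delta>" and j: "1 \<le> j"
  shows "prob (average_deviation_event n \<delta> j)
    \<le> 8 * exp (- (min (\<delta>\<^sup>2 / (2 * max b 1)) (2 * \<delta>\<^sup>2) / 2) * real j ^ 2)"
proof -
  define c where "c = min (\<delta>\<^sup>2 / (2 * max b 1)) (2 * \<delta>\<^sup>2) / 2"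
  have "0 \<le> c" by (simp add: c_def)
  have rate: "2 * c \<le> \<delta>\<^sup>2 / (2 * max b 1)" "2 * c \<le> 2 * \<delta>\<^sup>2"
    by (simp_all add: c_def)
  define F1 where "F1 = {\<omega>\<in>space P. \<delta> \<le> \<bar>step_average (block_noise nu n 1) j \<omega>\<bar>}"
  define F2 where "F2 = {\<omega>\<in>space P. \<delta> \<le> \<bar>step_average (masked_noise M nu acc n) j \<omega>\<bar>}"
  define F3 where "F3 = {\<omega>\<in>space P. \<delta> \<le> \<bar>step_average (load_share N acc n) j \<omega> - (1 - (1/2)^N) / N\<bar>}"
  define F4 where "F4 = {\<omega>\<in>space P. \<delta> \<le> \<bar>step_average (accessed acc n) j \<omega> - 1/2\<bar>}"
  have "average_deviation_event n \<delta> j = F1 \<union> F2 \<union> F3 \<union> F4"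
    by (auto simp: average_deviation_event_def F1_def F2_def F3_def F4_def)
  moreover have "F1 \<in> events" "F2 \<in> events" "F3 \<in> events" "F4 \<in> events"
    unfolding F1_def F2_def F3_def F4_def by (measurable, measurable, measurable, measurable)
  ultimately have "prob (average_deviation_event n \<delta> j) \<le> prob F1 + prob F2 + prob F3 + prob F4"
    by (simp add: measure_subadditive4)
  moreover have "exp (- (\<delta>\<^sup>2 / (2 * max b 1)) * card (estimation_steps j)) \<le> exp (- c * real j ^ 2)"
    by (rule exp_card_estimation_steps_le) (use \<open>0 \<le> c\<close> rate in auto)
  moreover have "exp (- (2 * \<delta>\<^sup>2) * card (estimation_steps j)) \<le> exp (- c * real j ^ 2)"
    by (rule exp_card_estimation_steps_le) (use \<open>0 \<le> c\<close> rate in auto)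
  ultimately show ?thesis
    using prob_block_noise_average_far[where n=n and k=1, OF \<delta> j] prob_masked_noise_average_far[where n=n, OF \<delta> j]
      prob_load_share_average_far[OF n \<delta> j] prob_accessed_average_far[where n=n, OF \<delta> j]
    unfolding F1_def F2_def F3_def F4_def c_def by linarith
qed

lemma prob_est_incorrect:
  assumes n: "n \<in> {1..N}" and u: "0 < U n 1"
  shows "\<exists>c>0. \<forall>j\<ge>1. prob {\<omega>\<in>space P. \<not> est_correct N M U nu acc n j \<omega>} \<le> 8 * exp (- c * real j ^ 2)"
proof -
  obtain \<delta> where "0 < \<delta>" and correct: "\<And>j \<omega>. 1 \<le> j \<Longrightarrow>
      \<bar>step_average (block_noise nu n 1) j \<omega>\<bar> < \<delta> \<Longrightarrow> \<bar>step_average (masked_noise M nu acc n) j \<omega>\<bar> < \<delta> \<Longrightarrow>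
      \<bar>step_average (load_share N acc n) j \<omega> - (1 - (1/2)^N) / N\<bar> < \<delta> \<Longrightarrow>
      \<bar>step_average (accessed acc n) j \<omega> - 1/2\<bar> < \<delta> \<Longrightarrow> est_correct N M U nu acc n j \<omega>"
    by (rule est_correct_if_step_averages_near_means[where U=U and n=n, OF u agents_pos]) (rule that)
  have "prob {\<omega>\<in>space P. \<not> est_correct N M U nu acc n j \<omega>} \<le> prob (average_deviation_event n \<delta> j)"
    if "1 \<le> j" for j
  proof (rule finite_measure_mono)
    show "{\<omega>\<in>space P. \<not> est_correct N M U nu acc n j \<omega>} \<subseteq> average_deviation_event n \<delta> j"
      unfolding average_deviation_event_def using correct[OF that] by (force simp: not_le)
    show "average_deviation_event n \<delta> j \<in> events"
      unfolding average_deviation_event_def by measurable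
  qed
  moreover have "0 < min (\<delta>\<^sup>2 / (2 * max b 1)) (2 * \<delta>\<^sup>2) / 2"
    using \<open>0 < \<delta>\<close> by simp
  ultimately show ?thesis
    using prob_average_deviation_event[OF n \<open>0 < \<delta>\<close>] by (blast intro: order_trans)
qed

lemma prob_some_est_incorrect_le_sum:
  assumes "1 \<le> j"
  shows "prob {\<omega>\<in>space P. \<exists>n\<in>{1..N}. \<not> est_correct N M U nu acc n j \<omega>}
    \<le> (\<Sum>n\<in>{1..N}. prob {\<omega>\<in>space P. \<not> est_correct N M U nu acc n j \<omega>})"
proof -
  have "prob {\<omega>\<in>space P. \<exists>n\<in>{1..N}. \<not> est_correct N M U nu acc n j \<omega>}
        = prob (\<Union>n\<in>{1..N}. {\<omega>\<in>space P. \<not> est_correct N M U nu acc n j \<omega>})"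
    by (rule arg_cong[where f=prob]) auto
  also have "\<dots> \<le> (\<Sum>n\<in>{1..N}. prob {\<omega>\<in>space P. \<not> est_correct N M U nu acc n j \<omega>})"
    using assms by (intro measure_UNION_le est_incorrect_event) auto
  finally show ?thesis .
qed

theorem prob_some_est_incorrect_bigo:
  assumes u: "\<forall>n\<in>{1..N}. 0 < U n 1"
  shows "(\<lambda>j. prob {\<omega>\<in>space P. \<exists>n\<in>{1..N}. \<not> est_correct N M U nu acc n j \<omega>})
    \<in> O(\<lambda>j. exp (- (real j powr (7/5))))"
proof -
  have "\<forall>n\<in>{1..N}. \<exists>c>0. \<forall>j\<ge>1.
      prob {\<omega>\<in>space P. \<not> est_correct N M U nu acc n j \<omega>} \<le> 8 * exp (- c * real j ^ 2)"
    using prob_est_incorrect u by blast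
  then obtain c where c: "\<forall>n\<in>{1..N}. 0 < c n \<and> (\<forall>j\<ge>1.
      prob {\<omega>\<in>space P. \<not> est_correct N M U nu acc n j \<omega>} \<le> 8 * exp (- c n * real j ^ 2))"
    by (rule bchoice[THEN exE]) (rule that)
  have "prob {\<omega>\<in>space P. \<exists>n\<in>{1..N}. \<not> est_correct N M U nu acc n j \<omega>}
      \<le> \<bar>\<Sum>n\<in>{1..N}. 8 * exp (- c n * real j ^ 2)\<bar>" if "1 \<le> j" for j
  proof -
    have "(\<Sum>n\<in>{1..N}. prob {\<omega>\<in>space P. \<not> est_correct N M U nu acc n j \<omega>})
        \<le> (\<Sum>n\<in>{1..N}. 8 * exp (- c n * real j ^ 2))"
      using c that by (intro sum_mono) auto
    then show ?thesis
      using prob_some_est_incorrect_le_sum[where U=U, OF that] abs_ge_self[of "\<Sum>n\<in>{1..N}. 8 * exp (- c n * real j ^ 2)"]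
      by linarith
  qed
  then have "(\<lambda>j. prob {\<omega>\<in>space P. \<exists>n\<in>{1..N}. \<not> est_correct N M U nu acc n j \<omega>})
      \<in> O(\<lambda>j. \<Sum>n\<in>{1..N}. 8 * exp (- c n * real j ^ 2))"
    by (intro bigoI[where c=1] eventually_mono[OF eventually_ge_at_top[of 1]]) auto
  also have "(\<lambda>j. \<Sum>n\<in>{1..N}. 8 * exp (- c n * real j ^ 2)) \<in> O(\<lambda>j. exp (- (real j powr (7/5))))"
  proof (rule big_sum_in_bigo)
    fix n assume "n \<in> {1..N}"
    with c have "0 < c n" by blast
    then show "(\<lambda>j. 8 * exp (- c n * real j ^ 2)) \<in> O(\<lambda>j. exp (- (real j powr (7/5))))"
      by real_asymp
  qed
  finally show ?thesis .
qed

end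

theorem lemma5:
  fixes P :: "'a measure" and N M :: nat and U :: "nat \<Rightarrow> nat \<Rightarrow> real" and Umax b :: real
    and nu :: "nat \<Rightarrow> nat \<Rightarrow> nat \<Rightarrow> nat \<Rightarrow> 'a \<Rightarrow> real"
    and acc :: "nat \<Rightarrow> nat \<Rightarrow> nat \<Rightarrow> 'a \<Rightarrow> bool"
  assumes "prob_space P"
    and "1 \<le> M" and "1 \<le> N"
    and "\<forall>n\<in>{1..N}. \<forall>m\<in>{1..M}. 0 \<le> U n m \<and> U n m \<le> Umax"
    and "\<forall>n\<in>{1..N}. 0 < U n 1"
    and "\<forall>n i k s. nu n i k s \<in> borel_measurable P"
    and "\<forall>n i k s n' i' k' s'. distr P borel (nu n i k s) = distr P borel (nu n' i' k' s')"
    and "\<forall>n i k s. integrable P (nu n i k s) \<and> (\<integral>\<omega>. nu n i k s \<omega> \<partial>P) = 0"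
    and "\<forall>n i k s. subgaussian P (nu n i k s) b"
    and "\<forall>n i s. {\<omega>\<in>space P. acc n i s \<omega>} \<in> sets P \<and> measure P {\<omega>\<in>space P. acc n i s \<omega>} = 1/2"
    and "prob_space.indep_vars P (\<lambda>_. borel)
           (\<lambda>x \<omega>. case x of Inl (n, i, k, s) \<Rightarrow> nu n i k s \<omega>
                          | Inr (n, i, s) \<Rightarrow> of_bool (acc n i s \<omega>)) UNIV"
  shows "(\<lambda>j. measure P {\<omega>\<in>space P. \<exists>n\<in>{1..N}. \<not> est_correct N M U nu acc n j \<omega>})
           \<in> O(\<lambda>j. exp (- (real j powr (7/5))))"
proof -
  interpret ene_estimation P N M nu acc b
  proof (rule ene_estimation.intro[OF assms(1) ene_estimation_axioms.intro])
    show "1 \<le> N" by (fact assms(3))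
    show "subgaussian P (nu n i k s) b" for n i k s using assms(9) by blast
    show "{\<omega>\<in>space P. acc n i s \<omega>} \<in> sets P" for n i s using assms(10) by blast
    show "measure P {\<omega>\<in>space P. acc n i s \<omega>} = 1/2" for n i s using assms(10) by blast
  qed (fact assms(11))
  show ?thesis
    using prob_some_est_incorrect_bigo assms(5) .
qed

end
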